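(* Let $(\mathcal{C},\mathbb{E},\mathfrak{s})$ satisfy (ET1), (ET2) and (ET3). If the additive subfunctor $\mathbb{F}\subseteq\mathbb{E}$ has enough special injective morphisms, then $(\mathrm{Ph}(\mathbb{F}),\mathbb{F}\text{-}\mathrm{inj})$ is an $\mathbb{E}$-cotorsion pair of ideals; in particular $\mathrm{Ph}(\mathbb{F})^{\perp_{\mathbb{E}}}=\mathbb{F}\text{-}\mathrm{inj}$.
   Context: $\mathcal{C}$ additive, $\mathbb{E}:\mathcal{C}^{\mathrm{op}}\times\mathcal{C}\to\mathrm{Ab}$ biadditive (ET1); for $\delta\in\mathbb{E}(C,A)$, $a:A\to A'$, $c:C'\to C$ put $a_\star\delta=\mathbb{E}(C,a)(\delta)$, $c^\star\delta=\mathbb{E}(c,A)(\delta)$. (ET2): $\mathfrak{s}$ is an additive realization (Nakaoka–Palu): each $\delta\in\mathbb{E}(C,A)$ is assigned an equivalence class of sequences $A\xrightarrow{x}B\xrightarrow{y}C$ (up to isomorphism of middle terms), $0$ is realized by split sequences, realization respects direct sums, and if $a_\star\delta=c^\star\delta'$ there is $b$ making the realizing sequences commute. Realized pairs are $\mathbb{E}$-triangles $A\to B\to C\overset{\delta}{\dashrightarrow}$; such commuting triples are morphisms of $\mathbb{E}$-triangles. (ET3): given $\mathbb{E}$-triangles $A\xrightarrow{x}B\to C\overset{\delta}{\dashrightarrow}$, $A'\xrightarrow{x'}B'\to C'\overset{\delta'}{\dashrightarrow}$ and $a,b$ with $bx=x'a$, there is $c$ with $(a,b,c)$ a morphism of $\mathbb{E}$-triangles.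 Additive subfunctor $\mathbb{F}$: subgroups $\mathbb{F}(C,A)\subseteq\mathbb{E}(C,A)$ stable under $a_\star,c^\star$; $\mathbb{F}$-triangles are $\mathbb{E}$-triangles with extension in $\mathbb{F}$. $\mathrm{Ph}(\mathbb{F})$: morphisms $\varphi:X\to C$ with $\varphi^\star\delta\in\mathbb{F}(X,A)$ for all $\delta\in\mathbb{E}(C,A)$. $\mathbb{F}\text{-}\mathrm{inj}$: morphisms $i:A\to Y$ with $i_\star\delta=0$ for all $\delta\in\mathbb{F}(C,A)$. $\mathcal{M}^{\perp_{\mathbb{E}}}$ and ${}^{\perp_{\mathbb{E}}}\mathcal{M}$: the classes of $g:A\to Y$ with $m^\star g_\star\delta=0$ (for all $m\in\mathcal{M}$, $m:X\to C$, $\delta\in\mathbb{E}(C,A)$), resp. of $g:X\to C$ with $g^\star m_\star\delta=0$ (for all $m\in\mathcal{M}$, $m:A\to Y$, $\delta\in\mathbb{E}(C,A)$). An $\mathbb{E}$-cotorsion pair is a pair of ideals $(\mathcal{I},\mathcal{J})$ with $\mathcal{I}={}^{\perp_{\mathbb{E}}}\mathcal{J}$, $\mathcal{J}=\mathcal{I}^{\perp_{\mathbb{E}}}$. $\mathbb{F}$ has enough special injective morphisms if for every $A$ there exist an $\mathbb{F}$-triangle $A\xrightarrow{e}B\to C\overset{\delta}{\dashrightarrow}$ with $e\in\mathbb{F}\text{-}\mathrm{inj}$, an $\mathbb{E}$-triangle $A\to B'\to C'\overset{\delta'}{\dashrightarrow}$ and a morphism of $\mathbb{E}$-triangles $(\mathrm{id}_A,b,\varphi)$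 from the first to the second with $\varphi\in\mathrm{Ph}(\mathbb{F})$. *)

theory Defs
  imports "HOL-Algebra.Group"
begin

record ('o, 'm, 'e) extri_data =
  obj   :: "'o set"
  mor   :: "'m set"
  dm    :: "'m \<Rightarrow> 'o"
  cd    :: "'m \<Rightarrow> 'o"
  cmp   :: "'m \<Rightarrow> 'm \<Rightarrow> 'm"                (* cmp g f = g o f *)
  idm   :: "'o \<Rightarrow> 'm"
  madd  :: "'m \<Rightarrow> 'm \<Rightarrow> 'm"
  mzero :: "'o \<Rightarrow> 'o \<Rightarrow> 'm"
  Ext   :: "'o \<Rightarrow> 'o \<Rightarrow> 'e set"            (* Ext K C A = E(C,A) *)
  eadd  :: "'o \<Rightarrow> 'o \<Rightarrow> 'e \<Rightarrow> 'e \<Rightarrow> 'e"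
  ezero :: "'o \<Rightarrow> 'o \<Rightarrow> 'e"
  push  :: "'o \<Rightarrow> 'm \<Rightarrow> 'e \<Rightarrow> 'e"          (* push K C a \<delta> = a_* \<delta>, \<delta> \<in> E(C, dm a) *)
  pull  :: "'o \<Rightarrow> 'm \<Rightarrow> 'e \<Rightarrow> 'e"          (* pull K A c \<delta> = c^* \<delta>, \<delta> \<in> E(cd c, A) *)
  real  :: "'o \<Rightarrow> 'o \<Rightarrow> 'e \<Rightarrow> ('m \<times> 'm) set" (* realization s(\<delta>) for \<delta> \<in> E(C,A) *)

definition Hom :: "('o,'m,'e) extri_data \<Rightarrow> 'o \<Rightarrow> 'o \<Rightarrow> 'm set" where
  "Hom K A B = {f \<in> mor K. dm K f = A \<and> cd K f = B}"

definition HomGrp :: "('o,'m,'e) extri_data \<Rightarrow> 'o \<Rightarrow> 'o \<Rightarrow> 'm monoid" where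
  "HomGrp K A B = \<lparr>carrier = Hom K A B, mult = madd K, one = mzero K A B\<rparr>"

definition ExtGrp :: "('o,'m,'e) extri_data \<Rightarrow> 'o \<Rightarrow> 'o \<Rightarrow> 'e monoid" where
  "ExtGrp K C A = \<lparr>carrier = Ext K C A, mult = eadd K C A, one = ezero K C A\<rparr>"

definition is_category :: "('o,'m,'e) extri_data \<Rightarrow> bool" where
  "is_category K \<longleftrightarrow>
     (\<forall>f \<in> mor K. dm K f \<in> obj K \<and> cd K f \<in> obj K) \<and>
     (\<forall>A \<in> obj K. idm K A \<in> Hom K A A) \<and>
     (\<forall>A \<in> obj K. \<forall>B \<in> obj K. \<forall>C \<in> obj K. \<forall>f \<in> Hom K A B. \<forall>g \<in> Hom K B C.
        cmp K g f \<in> Hom K A C) \<and>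
     (\<forall>f \<in> mor K. cmp K f (idm K (dm K f)) = f \<and> cmp K (idm K (cd K f)) f = f) \<and>
     (\<forall>f \<in> mor K. \<forall>g \<in> mor K. \<forall>h \<in> mor K. cd K f = dm K g \<longrightarrow> cd K g = dm K h \<longrightarrow>
        cmp K h (cmp K g f) = cmp K (cmp K h g) f)"

definition is_biproduct ::
  "('o,'m,'e) extri_data \<Rightarrow> 'o \<Rightarrow> 'o \<Rightarrow> 'o \<Rightarrow> 'm \<Rightarrow> 'm \<Rightarrow> 'm \<Rightarrow> 'm \<Rightarrow> bool" where
  "is_biproduct K A B P i1 i2 p1 p2 \<longleftrightarrow>
     P \<in> obj K \<and> i1 \<in> Hom K A P \<and> i2 \<in> Hom K B P \<and> p1 \<in> Hom K P A \<and> p2 \<in> Hom K P B \<and>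
     cmp K p1 i1 = idm K A \<and> cmp K p2 i2 = idm K B \<and>
     cmp K p1 i2 = mzero K B A \<and> cmp K p2 i1 = mzero K A B \<and>
     madd K (cmp K i1 p1) (cmp K i2 p2) = idm K P"

definition is_additive_category :: "('o,'m,'e) extri_data \<Rightarrow> bool" where
  "is_additive_category K \<longleftrightarrow>
     is_category K \<and>
     (\<forall>A \<in> obj K. \<forall>B \<in> obj K. comm_group (HomGrp K A B)) \<and>
     (\<forall>A \<in> obj K. \<forall>B \<in> obj K. \<forall>C \<in> obj K. \<forall>f \<in> Hom K A B. \<forall>f' \<in> Hom K A B. \<forall>g \<in> Hom K B C.
        cmp K g (madd K f f') = madd K (cmp K g f) (cmp K g f')) \<and>
     (\<forall>A \<in> obj K. \<forall>B \<in> obj K. \<forall>C \<in> obj K. \<forall>f \<in> Hom K A B. \<forall>g \<in> Hom K B C. \<forall>g' \<in> Hom K B C.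
        cmp K (madd K g g') f = madd K (cmp K g f) (cmp K g' f)) \<and>
     (\<exists>Z \<in> obj K. \<forall>X \<in> obj K. Hom K Z X = {mzero K Z X} \<and> Hom K X Z = {mzero K X Z}) \<and>
     (\<forall>A \<in> obj K. \<forall>B \<in> obj K. \<exists>P i1 i2 p1 p2. is_biproduct K A B P i1 i2 p1 p2)"

text \<open>(ET1): \<open>E\<close> is a biadditive functor \<open>C^op \<times> C \<rightarrow> Ab\<close>.\<close>

definition ET1 :: "('o,'m,'e) extri_data \<Rightarrow> bool" where
  "ET1 K \<longleftrightarrow>
     (\<forall>C \<in> obj K. \<forall>A \<in> obj K. comm_group (ExtGrp K C A)) \<and>
     \<comment> \<open>covariant part\<close>
     (\<forall>C \<in> obj K. \<forall>a \<in> mor K. \<forall>\<delta> \<in> Ext K C (dm K a). push K C a \<delta> \<in> Ext K C (cd K a)) \<and>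
     (\<forall>C \<in> obj K. \<forall>a \<in> mor K. \<forall>\<delta> \<in> Ext K C (dm K a). \<forall>\<delta>' \<in> Ext K C (dm K a).
        push K C a (eadd K C (dm K a) \<delta> \<delta>') = eadd K C (cd K a) (push K C a \<delta>) (push K C a \<delta>')) \<and>
     (\<forall>C \<in> obj K. \<forall>A \<in> obj K. \<forall>\<delta> \<in> Ext K C A. push K C (idm K A) \<delta> = \<delta>) \<and>
     (\<forall>C \<in> obj K. \<forall>a \<in> mor K. \<forall>a' \<in> mor K. \<forall>\<delta> \<in> Ext K C (dm K a). cd K a = dm K a' \<longrightarrow>
        push K C (cmp K a' a) \<delta> = push K C a' (push K C a \<delta>)) \<and>
     (\<forall>C \<in> obj K. \<forall>A \<in> obj K. \<forall>A' \<in> obj K. \<forall>a \<in> Hom K A A'. \<forall>a' \<in> Hom K A A'. \<forall>\<delta> \<in> Ext K C A.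
        push K C (madd K a a') \<delta> = eadd K C A' (push K C a \<delta>) (push K C a' \<delta>)) \<and>
     \<comment> \<open>contravariant part\<close>
     (\<forall>A \<in> obj K. \<forall>c \<in> mor K. \<forall>\<delta> \<in> Ext K (cd K c) A. pull K A c \<delta> \<in> Ext K (dm K c) A) \<and>
     (\<forall>A \<in> obj K. \<forall>c \<in> mor K. \<forall>\<delta> \<in> Ext K (cd K c) A. \<forall>\<delta>' \<in> Ext K (cd K c) A.
        pull K A c (eadd K (cd K c) A \<delta> \<delta>') = eadd K (dm K c) A (pull K A c \<delta>) (pull K A c \<delta>')) \<and>
     (\<forall>C \<in> obj K. \<forall>A \<in> obj K. \<forall>\<delta> \<in> Ext K C A. pull K A (idm K C) \<delta> = \<delta>) \<and>
     (\<forall>A \<in> obj K. \<forall>c \<in> mor K. \<forall>c' \<in> mor K. \<forall>\<delta> \<in> Ext K (cd K c) A. cd K c' = dm K c \<longrightarrow>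
        pull K A (cmp K c c') \<delta> = pull K A c' (pull K A c \<delta>)) \<and>
     (\<forall>A \<in> obj K. \<forall>C \<in> obj K. \<forall>C' \<in> obj K. \<forall>c \<in> Hom K C' C. \<forall>c' \<in> Hom K C' C. \<forall>\<delta> \<in> Ext K C A.
        pull K A (madd K c c') \<delta> = eadd K C' A (pull K A c \<delta>) (pull K A c' \<delta>)) \<and>
     \<comment> \<open>bifunctoriality\<close>
     (\<forall>a \<in> mor K. \<forall>c \<in> mor K. \<forall>\<delta> \<in> Ext K (cd K c) (dm K a).
        push K (dm K c) a (pull K (dm K a) c \<delta>) = pull K (cd K a) c (push K (cd K c) a \<delta>))"

definition is_iso :: "('o,'m,'e) extri_data \<Rightarrow> 'm \<Rightarrow> bool" where
  "is_iso K b \<longleftrightarrow> b \<in> mor K \<and> (\<exists>b' \<in> Hom K (cd K b) (dm K b).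
      cmp K b' b = idm K (dm K b) \<and> cmp K b b' = idm K (cd K b))"

text \<open>Direct sum of morphisms \<open>f\<oplus>f' : A\<oplus>A' \<rightarrow> B\<oplus>B'\<close> w.r.t. chosen biproduct data.\<close>
definition msum :: "('o,'m,'e) extri_data \<Rightarrow> 'm \<Rightarrow> 'm \<Rightarrow> 'm \<Rightarrow> 'm \<Rightarrow> 'm \<Rightarrow> 'm \<Rightarrow> 'm" where
  "msum K f f' pA pA' iB iB' = madd K (cmp K iB (cmp K f pA)) (cmp K iB' (cmp K f' pA'))"

definition ET2 :: "('o,'m,'e) extri_data \<Rightarrow> bool" where
  "ET2 K \<longleftrightarrow>
     \<comment> \<open>each \<open>\<delta>\<close> is assigned an (inhabited) isomorphism class of sequences \<open>A \<rightarrow> B \<rightarrow> C\<close>\<close>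
     (\<forall>C \<in> obj K. \<forall>A \<in> obj K. \<forall>\<delta> \<in> Ext K C A.
        real K C A \<delta> \<noteq> {} \<and>
        (\<forall>(x, y) \<in> real K C A \<delta>. cd K x \<in> obj K \<and> x \<in> Hom K A (cd K x) \<and> y \<in> Hom K (cd K x) C \<and>
           (\<forall>x' y'. (x', y') \<in> real K C A \<delta> \<longleftrightarrow>
              (\<exists>B' \<in> obj K. x' \<in> Hom K A B' \<and> y' \<in> Hom K B' C \<and>
                 (\<exists>b \<in> Hom K (cd K x) B'. is_iso K b \<and> cmp K b x = x' \<and> cmp K y' b = y))))) \<and>
     \<comment> \<open>\<open>0\<close> is realized by split sequences\<close>
     (\<forall>C \<in> obj K. \<forall>A \<in> obj K. \<exists>P i1 i2 p1 p2.
        is_biproduct K A C P i1 i2 p1 p2 \<and> (i1, p2) \<in> real K C A (ezero K C A)) \<and>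
     \<comment> \<open>realization respects direct sums\<close>
     (\<forall>C \<in> obj K. \<forall>A \<in> obj K. \<forall>C' \<in> obj K. \<forall>A' \<in> obj K.
      \<forall>\<delta> \<in> Ext K C A. \<forall>\<delta>' \<in> Ext K C' A'. \<forall>x y x' y'.
      (x, y) \<in> real K C A \<delta> \<longrightarrow> (x', y') \<in> real K C' A' \<delta>' \<longrightarrow>
      (\<forall>PA iA iA' pA pA' PB iB iB' pB pB' PC iC iC' pC pC'.
         is_biproduct K A A' PA iA iA' pA pA' \<longrightarrow>
         is_biproduct K (cd K x) (cd K x') PB iB iB' pB pB' \<longrightarrow>
         is_biproduct K C C' PC iC iC' pC pC' \<longrightarrow>
         (msum K x x' pA pA' iB iB', msum K y y' pB pB' iC iC') \<in>
           real K PC PA (eadd K PC PA (push K PC iA (pull K A pC \<delta>))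
                                      (push K PC iA' (pull K A' pC' \<delta>'))))) \<and>
     \<comment> \<open>morphism condition\<close>
     (\<forall>C \<in> obj K. \<forall>A \<in> obj K. \<forall>C' \<in> obj K. \<forall>A' \<in> obj K.
      \<forall>\<delta> \<in> Ext K C A. \<forall>\<delta>' \<in> Ext K C' A'. \<forall>x y x' y' a c.
      (x, y) \<in> real K C A \<delta> \<longrightarrow> (x', y') \<in> real K C' A' \<delta>' \<longrightarrow>
      a \<in> Hom K A A' \<longrightarrow> c \<in> Hom K C C' \<longrightarrow> push K C a \<delta> = pull K A' c \<delta>' \<longrightarrow>
      (\<exists>b \<in> Hom K (cd K x) (cd K x'). cmp K b x = cmp K x' a \<and> cmp K y' b = cmp K c y))"

definition etri :: "('o,'m,'e) extri_data \<Rightarrow> 'o \<Rightarrow> 'm \<Rightarrow> 'm \<Rightarrow> 'o \<Rightarrow> 'e \<Rightarrow> bool" where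
  "etri K A x y C \<delta> \<longleftrightarrow> A \<in> obj K \<and> C \<in> obj K \<and> \<delta> \<in> Ext K C A \<and> (x, y) \<in> real K C A \<delta>"

definition etri_morph ::
  "('o,'m,'e) extri_data \<Rightarrow> 'o \<Rightarrow> 'm \<Rightarrow> 'm \<Rightarrow> 'o \<Rightarrow> 'e \<Rightarrow> 'o \<Rightarrow> 'm \<Rightarrow> 'm \<Rightarrow> 'o \<Rightarrow> 'e
     \<Rightarrow> 'm \<Rightarrow> 'm \<Rightarrow> 'm \<Rightarrow> bool" where
  "etri_morph K A x y C \<delta> A' x' y' C' \<delta>' a b c \<longleftrightarrow>
     a \<in> Hom K A A' \<and> b \<in> Hom K (cd K x) (cd K x') \<and> c \<in> Hom K C C' \<and>
     cmp K b x = cmp K x' a \<and> cmp K c y = cmp K y' b \<and>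
     push K C a \<delta> = pull K A' c \<delta>'"

definition ET3 :: "('o,'m,'e) extri_data \<Rightarrow> bool" where
  "ET3 K \<longleftrightarrow>
     (\<forall>A x y C \<delta> A' x' y' C' \<delta>' a b.
        etri K A x y C \<delta> \<longrightarrow> etri K A' x' y' C' \<delta>' \<longrightarrow>
        a \<in> Hom K A A' \<longrightarrow> b \<in> Hom K (cd K x) (cd K x') \<longrightarrow> cmp K b x = cmp K x' a \<longrightarrow>
        (\<exists>c. etri_morph K A x y C \<delta> A' x' y' C' \<delta>' a b c))"

definition additive_subfunctor :: "('o,'m,'e) extri_data \<Rightarrow> ('o \<Rightarrow> 'o \<Rightarrow> 'e set) \<Rightarrow> bool" where
  "additive_subfunctor K F \<longleftrightarrow>
     (\<forall>C \<in> obj K. \<forall>A \<in> obj K. subgroup (F C A) (ExtGrp K C A)) \<and>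
     (\<forall>C \<in> obj K. \<forall>a \<in> mor K. \<forall>\<delta> \<in> F C (dm K a). push K C a \<delta> \<in> F C (cd K a)) \<and>
     (\<forall>A \<in> obj K. \<forall>c \<in> mor K. \<forall>\<delta> \<in> F (cd K c) A. pull K A c \<delta> \<in> F (dm K c) A)"

definition Ph :: "('o,'m,'e) extri_data \<Rightarrow> ('o \<Rightarrow> 'o \<Rightarrow> 'e set) \<Rightarrow> 'm set" where
  "Ph K F = {\<phi> \<in> mor K. \<forall>A \<in> obj K. \<forall>\<delta> \<in> Ext K (cd K \<phi>) A. pull K A \<phi> \<delta> \<in> F (dm K \<phi>) A}"

definition F_inj :: "('o,'m,'e) extri_data \<Rightarrow> ('o \<Rightarrow> 'o \<Rightarrow> 'e set) \<Rightarrow> 'm set" where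
  "F_inj K F = {i \<in> mor K. \<forall>C \<in> obj K. \<forall>\<delta> \<in> F C (dm K i). push K C i \<delta> = ezero K C (cd K i)}"

definition perpR :: "('o,'m,'e) extri_data \<Rightarrow> 'm set \<Rightarrow> 'm set" where
  "perpR K M = {g \<in> mor K. \<forall>m \<in> M. \<forall>\<delta> \<in> Ext K (cd K m) (dm K g).
      pull K (cd K g) m (push K (cd K m) g \<delta>) = ezero K (dm K m) (cd K g)}"

definition perpL :: "('o,'m,'e) extri_data \<Rightarrow> 'm set \<Rightarrow> 'm set" where
  "perpL K M = {g \<in> mor K. \<forall>m \<in> M. \<forall>\<delta> \<in> Ext K (cd K g) (dm K m).
      pull K (cd K m) g (push K (cd K g) m \<delta>) = ezero K (dm K g) (cd K m)}"

definition is_ideal :: "('o,'m,'e) extri_data \<Rightarrow> 'm set \<Rightarrow> bool" where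
  "is_ideal K I \<longleftrightarrow> I \<subseteq> mor K \<and>
     (\<forall>A \<in> obj K. \<forall>B \<in> obj K. subgroup (I \<inter> Hom K A B) (HomGrp K A B)) \<and>
     (\<forall>f \<in> I. \<forall>g \<in> mor K. \<forall>h \<in> mor K. dm K g = cd K f \<longrightarrow> cd K h = dm K f \<longrightarrow>
        cmp K g (cmp K f h) \<in> I)"

definition E_cotorsion_pair :: "('o,'m,'e) extri_data \<Rightarrow> 'm set \<Rightarrow> 'm set \<Rightarrow> bool" where
  "E_cotorsion_pair K I J \<longleftrightarrow> is_ideal K I \<and> is_ideal K J \<and> I = perpL K J \<and> J = perpR K I"

definition enough_special_inj :: "('o,'m,'e) extri_data \<Rightarrow> ('o \<Rightarrow> 'o \<Rightarrow> 'e set) \<Rightarrow> bool" where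
  "enough_special_inj K F \<longleftrightarrow>
     (\<forall>A \<in> obj K. \<exists>e y C \<delta>. etri K A e y C \<delta> \<and> \<delta> \<in> F C A \<and> e \<in> F_inj K F \<and>
        (\<exists>x' y' C' \<delta>' b \<phi>. etri K A x' y' C' \<delta>' \<and> \<phi> \<in> Ph K F \<and>
           etri_morph K A e y C \<delta> A x' y' C' \<delta>' (idm K A) b \<phi>))"

end

theory Submission
  imports Defs
begin

text \<open>
  Both classes are ideals because \<open>\<phi>\<^sup>*\<close> and \<open>i\<^sub>*\<close> are additive in the morphism and
  functorial, and the inclusions \<open>F-inj \<subseteq> Ph(F)\<^sup>\<perp>\<close>, \<open>Ph(F) \<subseteq> \<^sup>\<perp>F-inj\<close> are
  immediate from \<open>i\<^sub>* \<phi>\<^sup>* = \<phi>\<^sup>* i\<^sub>*\<close>.  The converses use the exactness of the realizations: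
  if \<open>A \<rightarrow>x B \<rightarrow> C \<dashrightarrow>\<delta>\<close> is an \<open>E\<close>-triangle, then \<open>a : A \<rightarrow> Y\<close> factors through \<open>x\<close>
  as soon as \<open>a\<^sub>* \<delta> = 0\<close>, and \<open>\<theta> \<in> E(X,A)\<close> is of the form \<open>c\<^sup>* \<delta>\<close> as soon as \<open>x\<^sub>* \<theta> = 0\<close>.
  Take a special \<open>F\<close>-triangle \<open>A \<rightarrow>e B \<rightarrow> C \<dashrightarrow>\<delta>\<close>, so \<open>\<delta> = \<phi>\<^sup>* \<delta>'\<close> with \<open>\<phi>\<close> phantom.
  For \<open>g : A \<rightarrow> Y\<close> in \<open>Ph(F)\<^sup>\<perp>\<close> we get \<open>g\<^sub>* \<delta> = \<phi>\<^sup>* g\<^sub>* \<delta>' = 0\<close>, so \<open>g\<close> factors through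
  the \<open>F\<close>-injective \<open>e\<close> and is \<open>F\<close>-injective.  For \<open>g : X \<rightarrow> Y\<close> in \<open>\<^sup>\<perp>F-inj\<close> and
  \<open>\<theta> = g\<^sup>* \<epsilon>\<close> we get \<open>e\<^sub>* \<theta> = g\<^sup>* e\<^sub>* \<epsilon> = 0\<close>, so \<open>\<theta> = c\<^sup>* \<delta> \<in> F(X,A)\<close> and \<open>g\<close> is phantom.
\<close>

lemma (in group) subgroup_hom_preimages:
  assumes hom: "\<And>i. i \<in> I \<Longrightarrow> group_hom G (H i) (h i)"
    and sub: "\<And>i. i \<in> I \<Longrightarrow> subgroup (S i) (H i)"
  shows "subgroup {x \<in> carrier G. \<forall>i \<in> I. h i x \<in> S i} G"
proof (rule subgroupI)
  have "h i \<one> \<in> S i" if "i \<in> I" for i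
    using group_hom.hom_one[OF hom[OF that]] subgroup.one_closed[OF sub[OF that]] by simp
  then show "{x \<in> carrier G. \<forall>i\<in>I. h i x \<in> S i} \<noteq> {}" by blast
next
  fix a assume a: "a \<in> {x \<in> carrier G. \<forall>i\<in>I. h i x \<in> S i}"
  have "h i (inv a) \<in> S i" if "i \<in> I" for i
    using group_hom.hom_inv[OF hom[OF that]] subgroup.m_inv_closed[OF sub[OF that]] a that by simp
  then show "inv a \<in> {x \<in> carrier G. \<forall>i\<in>I. h i x \<in> S i}" using a by simp
next
  fix a b assume a: "a \<in> {x \<in> carrier G. \<forall>i\<in>I. h i x \<in> S i}"
    and b: "b \<in> {x \<in> carrier G. \<forall>i\<in>I. h i x \<in> S i}"
  have "h i (a \<otimes> b) \<in> S i" if "i \<in> I" for i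
    using group_hom.hom_mult[OF hom[OF that]] subgroup.m_closed[OF sub[OF that]] a b that by simp
  then show "a \<otimes> b \<in> {x \<in> carrier G. \<forall>i\<in>I. h i x \<in> S i}" using a b by simp
qed auto

lemma mem_Hom_iff: "f \<in> Hom K A B \<longleftrightarrow> f \<in> mor K \<and> dm K f = A \<and> cd K f = B"
  by (simp add: Hom_def)

lemma HomGrp_simps [simp]:
  "carrier (HomGrp K A B) = Hom K A B" "mult (HomGrp K A B) = madd K" "one (HomGrp K A B) = mzero K A B"
  by (simp_all add: HomGrp_def)

lemma ExtGrp_simps [simp]:
  "carrier (ExtGrp K C A) = Ext K C A" "mult (ExtGrp K C A) = eadd K C A" "one (ExtGrp K C A) = ezero K C A"
  by (simp_all add: ExtGrp_def)

locale additive_cat =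
  fixes K :: "('o, 'm, 'e) extri_data"
  assumes additive: "is_additive_category K"
begin

lemma category: "is_category K"
  using additive unfolding is_additive_category_def by blast

lemma Hom_obj: "f \<in> Hom K A B \<Longrightarrow> A \<in> obj K \<and> B \<in> obj K"
  using category unfolding is_category_def mem_Hom_iff by blast

lemma idm_Hom: "A \<in> obj K \<Longrightarrow> idm K A \<in> Hom K A A"
  using category unfolding is_category_def by blast

lemma cmp_Hom: "f \<in> Hom K A B \<Longrightarrow> g \<in> Hom K B C \<Longrightarrow> cmp K g f \<in> Hom K A C"
  using category Hom_obj[of f] Hom_obj[of g] unfolding is_category_def by blast

lemma cmp_assoc:
  "f \<in> Hom K A B \<Longrightarrow> g \<in> Hom K B C \<Longrightarrow> h \<in> Hom K C D \<Longrightarrow> cmp K h (cmp K g f) = cmp K (cmp K h g) f"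
  using category unfolding is_category_def mem_Hom_iff by metis

lemma cmp_idm_left: "f \<in> Hom K A B \<Longrightarrow> cmp K (idm K B) f = f"
  using category unfolding is_category_def mem_Hom_iff by blast

lemma cmp_idm_right: "f \<in> Hom K A B \<Longrightarrow> cmp K f (idm K A) = f"
  using category unfolding is_category_def mem_Hom_iff by blast

lemma HomGrp_group: "A \<in> obj K \<Longrightarrow> B \<in> obj K \<Longrightarrow> group (HomGrp K A B)"
  using additive comm_group.axioms(2) unfolding is_additive_category_def by blast

lemma is_idealI:
  assumes "I \<subseteq> mor K"
    and "\<And>A B. A \<in> obj K \<Longrightarrow> B \<in> obj K \<Longrightarrow> subgroup (I \<inter> Hom K A B) (HomGrp K A B)"
    and "\<And>f g A B C. f \<in> I \<Longrightarrow> f \<in> Hom K A B \<Longrightarrow> g \<in> Hom K B C \<Longrightarrow> cmp K g f \<in> I"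
    and "\<And>f h A B W. f \<in> I \<Longrightarrow> f \<in> Hom K A B \<Longrightarrow> h \<in> Hom K W A \<Longrightarrow> cmp K f h \<in> I"
  shows "is_ideal K I"
  unfolding is_ideal_def
proof (intro conjI ballI allI impI)
  show "I \<subseteq> mor K" by (fact assms(1))
  show "subgroup (I \<inter> Hom K A B) (HomGrp K A B)" if "A \<in> obj K" "B \<in> obj K" for A B
    using assms(2) that .
next
  fix f g h assume f: "f \<in> I" and "g \<in> mor K" "h \<in> mor K" "dm K g = cd K f" "cd K h = dm K f"
  then have Hf: "f \<in> Hom K (dm K f) (cd K f)" and Hg: "g \<in> Hom K (cd K f) (cd K g)"
    and Hh: "h \<in> Hom K (dm K h) (dm K f)"
    using assms(1) by (auto simp: mem_Hom_iff)
  have "cmp K f h \<in> I" by (rule assms(4)[OF f Hf Hh])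
  then show "cmp K g (cmp K f h) \<in> I" by (rule assms(3)[OF _ cmp_Hom[OF Hh Hf] Hg])
qed

end

locale ext_bifunctor = additive_cat +
  assumes ET1: "ET1 K"
begin

lemma ExtGrp_group: "C \<in> obj K \<Longrightarrow> A \<in> obj K \<Longrightarrow> group (ExtGrp K C A)"
  using ET1 unfolding ET1_def by (elim conjE) (metis comm_group.axioms(2))

lemma ezero_Ext: "C \<in> obj K \<Longrightarrow> A \<in> obj K \<Longrightarrow> ezero K C A \<in> Ext K C A"
  using group.is_monoid[OF ExtGrp_group] monoid.one_closed by fastforce

lemma push_Ext: "a \<in> Hom K A A' \<Longrightarrow> C \<in> obj K \<Longrightarrow> \<delta> \<in> Ext K C A \<Longrightarrow> push K C a \<delta> \<in> Ext K C A'"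
  using ET1 unfolding ET1_def Hom_def by (elim conjE) (metis (mono_tags, lifting) mem_Collect_eq)

lemma pull_Ext: "c \<in> Hom K C' C \<Longrightarrow> A \<in> obj K \<Longrightarrow> \<delta> \<in> Ext K C A \<Longrightarrow> pull K A c \<delta> \<in> Ext K C' A"
  using ET1 unfolding ET1_def Hom_def by (elim conjE) (metis (mono_tags, lifting) mem_Collect_eq)

lemma pull_idm: "C \<in> obj K \<Longrightarrow> A \<in> obj K \<Longrightarrow> \<delta> \<in> Ext K C A \<Longrightarrow> pull K A (idm K C) \<delta> = \<delta>"
  using ET1 unfolding ET1_def by (elim conjE) (metis (mono_tags, lifting))

lemma push_idm: "C \<in> obj K \<Longrightarrow> A \<in> obj K \<Longrightarrow> \<delta> \<in> Ext K C A \<Longrightarrow> push K C (idm K A) \<delta> = \<delta>"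
  using ET1 unfolding ET1_def by (elim conjE) (metis (mono_tags, lifting))

lemma push_cmp:
  "a \<in> Hom K A A' \<Longrightarrow> a' \<in> Hom K A' A'' \<Longrightarrow> C \<in> obj K \<Longrightarrow> \<delta> \<in> Ext K C A \<Longrightarrow>
   push K C (cmp K a' a) \<delta> = push K C a' (push K C a \<delta>)"
  using ET1 unfolding ET1_def Hom_def by (elim conjE) (metis (mono_tags, lifting) mem_Collect_eq)

lemma pull_cmp:
  "c \<in> Hom K C' C \<Longrightarrow> c' \<in> Hom K C'' C' \<Longrightarrow> A \<in> obj K \<Longrightarrow> \<delta> \<in> Ext K C A \<Longrightarrow>
   pull K A (cmp K c c') \<delta> = pull K A c' (pull K A c \<delta>)"
  using ET1 unfolding ET1_def Hom_def by (elim conjE) (metis (mono_tags, lifting) mem_Collect_eq)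

lemma push_pull:
  "a \<in> Hom K A A' \<Longrightarrow> c \<in> Hom K C' C \<Longrightarrow> \<delta> \<in> Ext K C A \<Longrightarrow>
   push K C' a (pull K A c \<delta>) = pull K A' c (push K C a \<delta>)"
  using ET1 unfolding ET1_def Hom_def by (elim conjE) (metis (mono_tags, lifting) mem_Collect_eq)

lemma push_group_hom:
  assumes a: "a \<in> Hom K A A'" and C: "C \<in> obj K"
  shows "group_hom (ExtGrp K C A) (ExtGrp K C A') (push K C a)"
proof -
  have "push K C a (eadd K C A \<delta> \<delta>') = eadd K C A' (push K C a \<delta>) (push K C a \<delta>')"
    if "\<delta> \<in> Ext K C A" "\<delta>' \<in> Ext K C A" for \<delta> \<delta>'
    using ET1 a C that unfolding ET1_def Hom_def by (elim conjE) (metis (mono_tags, lifting) mem_Collect_eq)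
  then show ?thesis
    using ExtGrp_group Hom_obj[OF a] C push_Ext[OF a C]
    unfolding group_hom_def group_hom_axioms_def hom_def by auto
qed

lemma push_ezero: "a \<in> Hom K A A' \<Longrightarrow> C \<in> obj K \<Longrightarrow> push K C a (ezero K C A) = ezero K C A'"
  using group_hom.hom_one[OF push_group_hom] by simp

lemma push_mor_group_hom:
  assumes "A \<in> obj K" "A' \<in> obj K" "C \<in> obj K" "\<delta> \<in> Ext K C A"
  shows "group_hom (HomGrp K A A') (ExtGrp K C A') (\<lambda>a. push K C a \<delta>)"
proof -
  have "push K C (madd K a a') \<delta> = eadd K C A' (push K C a \<delta>) (push K C a' \<delta>)"
    if "a \<in> Hom K A A'" "a' \<in> Hom K A A'" for a a'
    using ET1 assms that unfolding ET1_def by (elim conjE) (metis (mono_tags, lifting))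
  then show ?thesis
    using assms HomGrp_group ExtGrp_group push_Ext
    unfolding group_hom_def group_hom_axioms_def hom_def by auto
qed

lemma pull_mor_group_hom:
  assumes "C \<in> obj K" "C' \<in> obj K" "A \<in> obj K" "\<delta> \<in> Ext K C A"
  shows "group_hom (HomGrp K C' C) (ExtGrp K C' A) (\<lambda>c. pull K A c \<delta>)"
proof -
  have "pull K A (madd K c c') \<delta> = eadd K C' A (pull K A c \<delta>) (pull K A c' \<delta>)"
    if "c \<in> Hom K C' C" "c' \<in> Hom K C' C" for c c'
    using ET1 assms that unfolding ET1_def by (elim conjE) (metis (mono_tags, lifting))
  then show ?thesis
    using assms HomGrp_group ExtGrp_group pull_Ext
    unfolding group_hom_def group_hom_axioms_def hom_def by auto
qed

end

locale extriangulated = ext_bifunctor +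
  assumes ET2: "ET2 K" and ET3: "ET3 K"
begin

lemma etri_inflation_Hom: "etri K A x y C \<delta> \<Longrightarrow> x \<in> Hom K A (cd K x)"
  using ET2[unfolded ET2_def, THEN conjunct1] unfolding etri_def by blast

lemma etri_exists:
  assumes "C \<in> obj K" "A \<in> obj K" "\<delta> \<in> Ext K C A"
  obtains x y where "etri K A x y C \<delta>"
  using ET2[unfolded ET2_def, THEN conjunct1] assms unfolding etri_def
  by (metis all_not_in_conv surj_pair)

lemma split_etri:
  assumes "C \<in> obj K" "Y \<in> obj K"
  obtains P i1 i2 p1 p2 where "is_biproduct K Y C P i1 i2 p1 p2" "etri K Y i1 p2 C (ezero K C Y)"
  using ET2[unfolded ET2_def, THEN conjunct2, THEN conjunct1] assms ezero_Ext
  unfolding etri_def by blast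

lemma etri_morph_from_Ext_eq:
  assumes "etri K A x y C \<delta>" "etri K A' x' y' C' \<delta>'" "a \<in> Hom K A A'" "c \<in> Hom K C C'"
    and "push K C a \<delta> = pull K A' c \<delta>'"
  obtains b where "b \<in> Hom K (cd K x) (cd K x')" "cmp K b x = cmp K x' a"
  using ET2[unfolded ET2_def, THEN conjunct2, THEN conjunct2, THEN conjunct2] assms
  unfolding etri_def by blast

lemma etri_morph_exists:
  assumes "etri K A x y C \<delta>" "etri K A' x' y' C' \<delta>'"
    and "a \<in> Hom K A A'" "b \<in> Hom K (cd K x) (cd K x')" "cmp K b x = cmp K x' a"
  obtains c where "etri_morph K A x y C \<delta> A' x' y' C' \<delta>' a b c"
  using ET3 assms unfolding ET3_def by blast

text \<open>Exactness of \<open>Hom(B,Y) \<rightarrow> Hom(A,Y) \<rightarrow> E(C,Y)\<close>: compare with the split triangle of \<open>0\<close>.\<close>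

lemma factor_through_inflation:
  assumes t: "etri K A x y C \<delta>" and a: "a \<in> Hom K A Y" and a\<delta>: "push K C a \<delta> = ezero K C Y"
  obtains h where "h \<in> Hom K (cd K x) Y" "cmp K h x = a"
proof -
  have C: "C \<in> obj K" and Y: "Y \<in> obj K" using t Hom_obj[OF a] by (auto simp: etri_def)
  obtain P i1 i2 p1 p2 where bp: "is_biproduct K Y C P i1 i2 p1 p2"
    and split: "etri K Y i1 p2 C (ezero K C Y)"
    using split_etri[OF C Y] .
  have i1: "i1 \<in> Hom K Y P" and p1: "p1 \<in> Hom K P Y" and p1i1: "cmp K p1 i1 = idm K Y"
    using bp unfolding is_biproduct_def by auto
  have "push K C a \<delta> = pull K Y (idm K C) (ezero K C Y)"
    using a\<delta> pull_idm[OF C Y ezero_Ext[OF C Y]] by simp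
  then obtain b where "b \<in> Hom K (cd K x) (cd K i1)" and bx: "cmp K b x = cmp K i1 a"
    by (rule etri_morph_from_Ext_eq[OF t split a idm_Hom[OF C]])
  moreover have "cd K i1 = P" using i1 by (simp add: mem_Hom_iff)
  ultimately have b: "b \<in> Hom K (cd K x) P" by simp
  have x: "x \<in> Hom K A (cd K x)" using etri_inflation_Hom[OF t] .
  have "cmp K (cmp K p1 b) x = cmp K p1 (cmp K i1 a)"
    using cmp_assoc[OF x b p1] bx by simp
  also have "\<dots> = a"
    using cmp_assoc[OF a i1 p1] p1i1 cmp_idm_left[OF a] by simp
  finally show ?thesis using that cmp_Hom[OF b p1] by blast
qed

text \<open>Exactness of \<open>E(X,C) \<rightarrow> E(X,A) \<rightarrow> E(X,B)\<close>: realize \<open>\<theta>\<close>, factor \<open>x\<close> through its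
  inflation and complete to a morphism of triangles by (ET3).\<close>

lemma pull_of_push_inflation_zero:
  assumes t: "etri K A x y C \<delta>" and X: "X \<in> obj K" and \<theta>: "\<theta> \<in> Ext K X A"
    and x\<theta>: "push K X x \<theta> = ezero K X (cd K x)"
  obtains c where "c \<in> Hom K X C" "\<theta> = pull K A c \<delta>"
proof -
  have A: "A \<in> obj K" using t by (simp add: etri_def)
  obtain x' z where t': "etri K A x' z X \<theta>" using etri_exists[OF X A \<theta>] .
  obtain h where h: "h \<in> Hom K (cd K x') (cd K x)" "cmp K h x' = x"
    using factor_through_inflation[OF t' etri_inflation_Hom[OF t] x\<theta>] .
  have "cmp K h x' = cmp K x (idm K A)"
    using h(2) cmp_idm_right[OF etri_inflation_Hom[OF t]] by simp
  then obtain c where "etri_morph K A x' z X \<theta> A x y C \<delta> (idm K A) h c"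
    by (rule etri_morph_exists[OF t' t idm_Hom[OF A] h(1)])
  then have "c \<in> Hom K X C" "push K X (idm K A) \<theta> = pull K A c \<delta>"
    unfolding etri_morph_def by blast+
  then show ?thesis using that push_idm[OF X A \<theta>] by simp
qed

end

locale ext_subfunctor = ext_bifunctor +
  fixes F :: "'o \<Rightarrow> 'o \<Rightarrow> 'e set"
  assumes subfunctor: "additive_subfunctor K F"
begin

lemma F_subgroup: "C \<in> obj K \<Longrightarrow> A \<in> obj K \<Longrightarrow> subgroup (F C A) (ExtGrp K C A)"
  using subfunctor unfolding additive_subfunctor_def by blast

lemma F_subset_Ext: "C \<in> obj K \<Longrightarrow> A \<in> obj K \<Longrightarrow> F C A \<subseteq> Ext K C A"
  using subgroup.subset[OF F_subgroup] by simp

lemma push_F: "a \<in> Hom K A A' \<Longrightarrow> C \<in> obj K \<Longrightarrow> \<delta> \<in> F C A \<Longrightarrow> push K C a \<delta> \<in> F C A'"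
  using subfunctor unfolding additive_subfunctor_def mem_Hom_iff by blast

lemma pull_F: "c \<in> Hom K C' C \<Longrightarrow> A \<in> obj K \<Longrightarrow> \<delta> \<in> F C A \<Longrightarrow> pull K A c \<delta> \<in> F C' A"
  using subfunctor unfolding additive_subfunctor_def mem_Hom_iff by blast

lemma Ph_iff: "\<phi> \<in> Hom K X Y \<Longrightarrow> \<phi> \<in> Ph K F \<longleftrightarrow> (\<forall>A \<in> obj K. \<forall>\<delta> \<in> Ext K Y A. pull K A \<phi> \<delta> \<in> F X A)"
  by (auto simp: Ph_def mem_Hom_iff)

lemma F_inj_iff:
  "i \<in> Hom K X Y \<Longrightarrow> i \<in> F_inj K F \<longleftrightarrow> (\<forall>C \<in> obj K. \<forall>\<delta> \<in> F C X. push K C i \<delta> = ezero K C Y)"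
  by (auto simp: F_inj_def mem_Hom_iff)

lemma Ph_subgroup:
  assumes "X \<in> obj K" "Y \<in> obj K"
  shows "subgroup (Ph K F \<inter> Hom K X Y) (HomGrp K X Y)"
proof -
  have "Ph K F \<inter> Hom K X Y =
      {\<phi> \<in> carrier (HomGrp K X Y). \<forall>i \<in> Sigma (obj K) (Ext K Y). pull K (fst i) \<phi> (snd i) \<in> F X (fst i)}"
    using Ph_iff by auto
  also have "subgroup \<dots> (HomGrp K X Y)"
    using assms
    by (intro group.subgroup_hom_preimages[where H = "\<lambda>i. ExtGrp K X (fst i)"]
        HomGrp_group pull_mor_group_hom F_subgroup) auto
  finally show ?thesis .
qed

lemma F_inj_subgroup:
  assumes "X \<in> obj K" "Y \<in> obj K"
  shows "subgroup (F_inj K F \<inter> Hom K X Y) (HomGrp K X Y)"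
proof -
  have "F_inj K F \<inter> Hom K X Y =
      {i \<in> carrier (HomGrp K X Y). \<forall>j \<in> Sigma (obj K) (\<lambda>C. F C X). push K (fst j) i (snd j) \<in> {ezero K (fst j) Y}}"
    using F_inj_iff by auto
  also have "subgroup \<dots> (HomGrp K X Y)"
    using assms group.triv_subgroup[OF ExtGrp_group]
    by (intro group.subgroup_hom_preimages[where H = "\<lambda>j. ExtGrp K (fst j) Y"]
        HomGrp_group push_mor_group_hom) (auto intro: F_subset_Ext[THEN subsetD])
  finally show ?thesis .
qed

lemma Ph_cmp_left:
  assumes \<phi>: "\<phi> \<in> Ph K F" "\<phi> \<in> Hom K X Y" and g: "g \<in> Hom K Y Z"
  shows "cmp K g \<phi> \<in> Ph K F"
proof -
  have "pull K A (cmp K g \<phi>) \<delta> \<in> F X A" if A: "A \<in> obj K" and \<delta>: "\<delta> \<in> Ext K Z A" for A \<delta>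
  proof -
    have "pull K A \<phi> (pull K A g \<delta>) \<in> F X A"
      using \<phi> Ph_iff A pull_Ext[OF g A \<delta>] by blast
    then show ?thesis using pull_cmp[OF g \<phi>(2) A \<delta>] by simp
  qed
  then show ?thesis using Ph_iff[OF cmp_Hom[OF \<phi>(2) g]] by blast
qed

lemma Ph_cmp_right:
  assumes \<phi>: "\<phi> \<in> Ph K F" "\<phi> \<in> Hom K X Y" and h: "h \<in> Hom K W X"
  shows "cmp K \<phi> h \<in> Ph K F"
proof -
  have "pull K A (cmp K \<phi> h) \<delta> \<in> F W A" if A: "A \<in> obj K" and \<delta>: "\<delta> \<in> Ext K Y A" for A \<delta>
  proof -
    have "pull K A \<phi> \<delta> \<in> F X A" using \<phi> Ph_iff A \<delta> by blast
    then show ?thesis using pull_cmp[OF \<phi>(2) h A \<delta>] pull_F[OF h A] by simp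
  qed
  then show ?thesis using Ph_iff[OF cmp_Hom[OF h \<phi>(2)]] by blast
qed

lemma Ph_ideal: "is_ideal K (Ph K F)"
  by (rule is_idealI[OF _ Ph_subgroup Ph_cmp_left Ph_cmp_right]) (auto simp: Ph_def)

lemma F_inj_cmp_left:
  assumes i: "i \<in> F_inj K F" "i \<in> Hom K X Y" and g: "g \<in> Hom K Y Z"
  shows "cmp K g i \<in> F_inj K F"
proof -
  have "push K C (cmp K g i) \<delta> = ezero K C Z" if C: "C \<in> obj K" and \<delta>: "\<delta> \<in> F C X" for C \<delta>
  proof -
    have "\<delta> \<in> Ext K C X" using F_subset_Ext C Hom_obj[OF i(2)] \<delta> by blast
    then have "push K C (cmp K g i) \<delta> = push K C g (push K C i \<delta>)"
      using push_cmp[OF i(2) g C] by simp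
    also have "\<dots> = push K C g (ezero K C Y)" using i F_inj_iff C \<delta> by simp
    finally show ?thesis using push_ezero[OF g C] by simp
  qed
  then show ?thesis using F_inj_iff[OF cmp_Hom[OF i(2) g]] by blast
qed

lemma F_inj_cmp_right:
  assumes i: "i \<in> F_inj K F" "i \<in> Hom K X Y" and h: "h \<in> Hom K W X"
  shows "cmp K i h \<in> F_inj K F"
proof -
  have "push K C (cmp K i h) \<delta> = ezero K C Y" if C: "C \<in> obj K" and \<delta>: "\<delta> \<in> F C W" for C \<delta>
  proof -
    have "\<delta> \<in> Ext K C W" using F_subset_Ext C Hom_obj[OF h] \<delta> by blast
    then have "push K C (cmp K i h) \<delta> = push K C i (push K C h \<delta>)"
      using push_cmp[OF h i(2) C] by simp
    then show ?thesis using i F_inj_iff C push_F[OF h C \<delta>] by simp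
  qed
  then show ?thesis using F_inj_iff[OF cmp_Hom[OF h i(2)]] by blast
qed

lemma F_inj_ideal: "is_ideal K (F_inj K F)"
  by (rule is_idealI[OF _ F_inj_subgroup F_inj_cmp_left F_inj_cmp_right]) (auto simp: F_inj_def)

lemma pull_Ph_push_F_inj:
  assumes \<phi>: "\<phi> \<in> Ph K F" "\<phi> \<in> Hom K X C" and i: "i \<in> F_inj K F" "i \<in> Hom K A Y"
    and \<delta>: "\<delta> \<in> Ext K C A"
  shows "pull K Y \<phi> (push K C i \<delta>) = ezero K X Y"
proof -
  have "pull K A \<phi> \<delta> \<in> F X A" using \<phi> Ph_iff Hom_obj[OF i(2)] \<delta> by blast
  then have "push K X i (pull K A \<phi> \<delta>) = ezero K X Y" using i F_inj_iff Hom_obj[OF \<phi>(2)] by blast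
  then show ?thesis using push_pull[OF i(2) \<phi>(2) \<delta>] by simp
qed

lemma F_inj_subset_perpR_Ph: "F_inj K F \<subseteq> perpR K (Ph K F)"
proof
  fix i assume i: "i \<in> F_inj K F"
  then have iH: "i \<in> Hom K (dm K i) (cd K i)" by (simp add: F_inj_def mem_Hom_iff)
  have "pull K (cd K i) \<phi> (push K (cd K \<phi>) i \<delta>) = ezero K (dm K \<phi>) (cd K i)"
    if "\<phi> \<in> Ph K F" "\<delta> \<in> Ext K (cd K \<phi>) (dm K i)" for \<phi> \<delta>
    using pull_Ph_push_F_inj[OF that(1) _ i iH that(2)] that(1) by (simp add: Ph_def mem_Hom_iff)
  then show "i \<in> perpR K (Ph K F)" using iH by (simp add: perpR_def mem_Hom_iff)
qed

lemma Ph_subset_perpL_F_inj: "Ph K F \<subseteq> perpL K (F_inj K F)"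
proof
  fix \<phi> assume \<phi>: "\<phi> \<in> Ph K F"
  then have \<phi>H: "\<phi> \<in> Hom K (dm K \<phi>) (cd K \<phi>)" by (simp add: Ph_def mem_Hom_iff)
  have "pull K (cd K i) \<phi> (push K (cd K \<phi>) i \<delta>) = ezero K (dm K \<phi>) (cd K i)"
    if "i \<in> F_inj K F" "\<delta> \<in> Ext K (cd K \<phi>) (dm K i)" for i \<delta>
    using pull_Ph_push_F_inj[OF \<phi> \<phi>H that(1) _ that(2)] that(1) by (simp add: F_inj_def mem_Hom_iff)
  then show "\<phi> \<in> perpL K (F_inj K F)" using \<phi>H by (simp add: perpL_def mem_Hom_iff)
qed

lemma special_injective_triangle:
  assumes "enough_special_inj K F" and A: "A \<in> obj K"
  obtains e y C \<delta> \<phi> C' \<delta>' where "etri K A e y C \<delta>" "\<delta> \<in> F C A" "e \<in> F_inj K F"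
    "\<phi> \<in> Ph K F" "\<phi> \<in> Hom K C C'" "\<delta>' \<in> Ext K C' A" "\<delta> = pull K A \<phi> \<delta>'"
proof -
  obtain e y C \<delta> x' y' C' \<delta>' b \<phi> where t: "etri K A e y C \<delta>" "\<delta> \<in> F C A" "e \<in> F_inj K F"
    and t': "etri K A x' y' C' \<delta>'" and \<phi>: "\<phi> \<in> Ph K F"
    and m: "etri_morph K A e y C \<delta> A x' y' C' \<delta>' (idm K A) b \<phi>"
    using bspec[OF assms(1)[unfolded enough_special_inj_def] A] by (elim exE conjE) blast
  have \<phi>H: "\<phi> \<in> Hom K C C'" and eq: "push K C (idm K A) \<delta> = pull K A \<phi> \<delta>'"
    using m unfolding etri_morph_def by blast+
  have "C \<in> obj K" "\<delta> \<in> Ext K C A" "\<delta>' \<in> Ext K C' A" using t(1) t' unfolding etri_def by blast+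
  then show ?thesis using that[OF t \<phi> \<phi>H] eq push_idm[OF _ A] by simp
qed

end

locale extri_subfunctor = extriangulated K + ext_subfunctor K F
  for K :: "('o, 'm, 'e) extri_data" and F :: "'o \<Rightarrow> 'o \<Rightarrow> 'e set"
begin

lemma perpR_Ph_subset_F_inj:
  assumes esi: "enough_special_inj K F"
  shows "perpR K (Ph K F) \<subseteq> F_inj K F"
proof
  fix g assume g: "g \<in> perpR K (Ph K F)"
  define A Y where "A = dm K g" and "Y = cd K g"
  have gH: "g \<in> Hom K A Y" using g by (simp add: perpR_def A_def Y_def mem_Hom_iff)
  have perp: "\<And>\<phi> \<delta>. \<phi> \<in> Ph K F \<Longrightarrow> \<delta> \<in> Ext K (cd K \<phi>) A \<Longrightarrow>
      pull K Y \<phi> (push K (cd K \<phi>) g \<delta>) = ezero K (dm K \<phi>) Y"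
    using g by (simp add: perpR_def A_def Y_def)
  have A: "A \<in> obj K" using Hom_obj[OF gH] by blast
  obtain e y C \<delta> \<phi> C' \<delta>' where t: "etri K A e y C \<delta>" "\<delta> \<in> F C A" and e: "e \<in> F_inj K F"
    and \<phi>: "\<phi> \<in> Ph K F" "\<phi> \<in> Hom K C C'" and \<delta>': "\<delta>' \<in> Ext K C' A" and \<delta>: "\<delta> = pull K A \<phi> \<delta>'"
    by (rule special_injective_triangle[OF esi A])
  have "push K C g \<delta> = pull K Y \<phi> (push K C' g \<delta>')"
    using push_pull[OF gH \<phi>(2) \<delta>'] \<delta> by simp
  also have "\<dots> = ezero K C Y"
    using perp[OF \<phi>(1)] \<phi>(2) \<delta>' by (simp add: mem_Hom_iff)
  finally obtain h where h: "h \<in> Hom K (cd K e) Y" "cmp K h e = g"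
    by (rule factor_through_inflation[OF t(1) gH])
  show "g \<in> F_inj K F"
    using F_inj_cmp_left[OF e etri_inflation_Hom[OF t(1)] h(1)] h(2) by simp
qed

lemma perpL_F_inj_subset_Ph:
  assumes esi: "enough_special_inj K F"
  shows "perpL K (F_inj K F) \<subseteq> Ph K F"
proof
  fix g assume g: "g \<in> perpL K (F_inj K F)"
  define X Y where "X = dm K g" and "Y = cd K g"
  have gH: "g \<in> Hom K X Y" using g by (simp add: perpL_def X_def Y_def mem_Hom_iff)
  have perp: "\<And>i \<epsilon>. i \<in> F_inj K F \<Longrightarrow> \<epsilon> \<in> Ext K Y (dm K i) \<Longrightarrow>
      pull K (cd K i) g (push K Y i \<epsilon>) = ezero K X (cd K i)"
    using g by (simp add: perpL_def X_def Y_def)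
  have "pull K A g \<epsilon> \<in> F X A" if A: "A \<in> obj K" and \<epsilon>: "\<epsilon> \<in> Ext K Y A" for A \<epsilon>
  proof -
    obtain e y C \<delta> \<phi> C' \<delta>' where t: "etri K A e y C \<delta>" and \<delta>: "\<delta> \<in> F C A" and e: "e \<in> F_inj K F"
      and "\<phi> \<in> Ph K F" "\<phi> \<in> Hom K C C'" "\<delta>' \<in> Ext K C' A" "\<delta> = pull K A \<phi> \<delta>'"
      by (rule special_injective_triangle[OF esi A])
    have eH: "e \<in> Hom K A (cd K e)" using etri_inflation_Hom[OF t] .
    have "push K X e (pull K A g \<epsilon>) = pull K (cd K e) g (push K Y e \<epsilon>)"
      using push_pull[OF eH gH \<epsilon>] .
    also have "\<dots> = ezero K X (cd K e)"
      using perp[OF e] eH \<epsilon> by (simp add: mem_Hom_iff)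
    finally obtain c where "c \<in> Hom K X C" "pull K A g \<epsilon> = pull K A c \<delta>"
      using pull_of_push_inflation_zero[OF t _ pull_Ext[OF gH A \<epsilon>]] Hom_obj[OF gH] by blast
    then show ?thesis using pull_F A \<delta> by simp
  qed
  then show "g \<in> Ph K F" using Ph_iff[OF gH] by blast
qed

end

theorem corollary3p14:
  fixes K :: "('o, 'm, 'e) extri_data" and F :: "'o \<Rightarrow> 'o \<Rightarrow> 'e set"
  assumes "is_additive_category K" and "ET1 K" and "ET2 K" and "ET3 K"
    and "additive_subfunctor K F"
    and "enough_special_inj K F"
  shows "E_cotorsion_pair K (Ph K F) (F_inj K F) \<and> perpR K (Ph K F) = F_inj K F"
proof -
  interpret extri_subfunctor K F
    by unfold_locales (fact assms)+
  have "perpR K (Ph K F) = F_inj K F"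
    using perpR_Ph_subset_F_inj[OF assms(6)] F_inj_subset_perpR_Ph by (rule subset_antisym)
  moreover have "perpL K (F_inj K F) = Ph K F"
    using perpL_F_inj_subset_Ph[OF assms(6)] Ph_subset_perpL_F_inj by (rule subset_antisym)
  ultimately show ?thesis
    unfolding E_cotorsion_pair_def using Ph_ideal F_inj_ideal by simp
qed

end
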